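(* Let $p$ be a strictly monotone lattice norm on $\mathbb{R}^2$ with $p((1,0))=p((0,1))=1$, and let $\Phi$ be an Orlicz function. If $x,y\in L^\Phi(\mu)$ satisfy $0\le x\le y$ and $\|y\|_{\Phi,p}=1$, then $$\|y-x\|_{\Phi,p}\le 1-\delta_{m,p}\big(I_\Phi(x)\big),$$ where $\delta_{m,p}$ is the modulus of monotonicity of $(\mathbb{R}^2,p)$.
   Context: $(\Omega,\Sigma,\mu)$ is a $\sigma$-finite complete measure space, $L^0$ the space of (classes of a.e. equal) real measurable functions, ordered pointwise a.e. An Orlicz function is a function $\Phi:\mathbb{R}\to[0,\infty)$ which is convex, even, vanishes at $0$ and is not identically zero. $I_\Phi(x)=\int_\Omega\Phi(x(t))\,d\mu\in[0,+\infty]$; $L^\Phi(\mu)=\{x\in L^0: I_\Phi(\lambda x)<\infty\text{ for some }\lambda>0\}$. A lattice norm on $\mathbb{R}^2$ is a norm $p$ with $p((u,v))\le p((u',v'))$ whenever $|u|\le|u'|,|v|\le|v'|$; it is strictly monotone if $0\le X\le Y$ coordinatewise and $X\ne Y$ imply $p(X)<p(Y)$. $\|x\|_{\Phi,p}=\inf_{k>0}\frac1k p((1,I_\Phi(kx)))$ with the convention $p((1,+\infty))=+\infty$. The modulus of monotonicity of $(\mathbb{R}^2,p)$ is $\delta_{m,p}(\varepsilon)=\inf\{1-p(Y-X): X,Y\in\mathbb{R}^2,\ 0\le X\le Y \text{ coordinatewise},\ p(X)\ge\varepsilon,\ p(Y)=1\}$ for $\varepsilon\in(0,1]$, and $\delta_{m,p}(0)=0$.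 (One has $I_\Phi(x)\in[0,1]$ under the hypotheses.) *)

theory Defs
  imports "HOL-Analysis.Analysis"
begin

definition is_norm2 :: "(real \<times> real \<Rightarrow> real) \<Rightarrow> bool" where
  "is_norm2 p \<longleftrightarrow>
     (\<forall>X. p X = 0 \<longleftrightarrow> X = (0,0)) \<and>
     (\<forall>a u v. p (a * u, a * v) = abs a * p (u,v)) \<and>
     (\<forall>u v u' v'. p (u+u', v+v') \<le> p (u,v) + p (u',v'))"

definition lattice_norm2 :: "(real \<times> real \<Rightarrow> real) \<Rightarrow> bool" where
  "lattice_norm2 p \<longleftrightarrow> is_norm2 p \<and>
     (\<forall>u v u' v'. \<bar>u\<bar> \<le> \<bar>u'\<bar> \<and> \<bar>v\<bar> \<le> \<bar>v'\<bar> \<longrightarrow> p (u,v) \<le> p (u',v'))"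

definition strictly_monotone2 :: "(real \<times> real \<Rightarrow> real) \<Rightarrow> bool" where
  "strictly_monotone2 p \<longleftrightarrow>
     (\<forall>X Y. 0 \<le> fst X \<and> 0 \<le> snd X \<and> fst X \<le> fst Y \<and> snd X \<le> snd Y \<and> X \<noteq> Y
        \<longrightarrow> p X < p Y)"

definition delta_m :: "(real \<times> real \<Rightarrow> real) \<Rightarrow> real \<Rightarrow> real" where
  "delta_m p \<epsilon> = (if \<epsilon> = 0 then 0 else
     Inf {1 - p (fst Y - fst X, snd Y - snd X) | X Y.
            0 \<le> fst X \<and> 0 \<le> snd X \<and> fst X \<le> fst Y \<and> snd X \<le> snd Y \<and>
            p X \<ge> \<epsilon> \<and> p Y = 1})"

definition orlicz_function :: "(real \<Rightarrow> real) \<Rightarrow> bool" where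
  "orlicz_function \<Phi> \<longleftrightarrow> convex_on UNIV \<Phi> \<and> (\<forall>u. \<Phi> u \<ge> 0) \<and>
     (\<forall>u. \<Phi> (-u) = \<Phi> u) \<and> \<Phi> 0 = 0 \<and> (\<exists>u. \<Phi> u \<noteq> 0)"

definition I_Phi :: "'a measure \<Rightarrow> (real \<Rightarrow> real) \<Rightarrow> ('a \<Rightarrow> real) \<Rightarrow> ennreal" where
  "I_Phi M \<Phi> x = (\<integral>\<^sup>+ t. ennreal (\<Phi> (x t)) \<partial>M)"

definition orlicz_space :: "'a measure \<Rightarrow> (real \<Rightarrow> real) \<Rightarrow> ('a \<Rightarrow> real) set" where
  "orlicz_space M \<Phi> = {x \<in> borel_measurable M. \<exists>c>0. I_Phi M \<Phi> (\<lambda>t. c * x t) < \<infinity>}"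

definition p_ext :: "(real \<times> real \<Rightarrow> real) \<Rightarrow> ennreal \<Rightarrow> ennreal" where
  "p_ext p I = (if I = \<infinity> then \<infinity> else ennreal (p (1, enn2real I)))"

definition orlicz_p_norm ::
  "'a measure \<Rightarrow> (real \<Rightarrow> real) \<Rightarrow> (real \<times> real \<Rightarrow> real) \<Rightarrow> ('a \<Rightarrow> real) \<Rightarrow> ennreal" where
  "orlicz_p_norm M \<Phi> p x =
     (INF k\<in>{0<..}. ennreal (1/k) * p_ext p (I_Phi M \<Phi> (\<lambda>t. k * x t)))"

end

theory Submission
  imports Defs
begin

text \<open>
  Choose \<open>k > 0\<close> with \<open>p(1, I\<^sub>\<Phi>(ky))/k\<close> close to \<open>\<parallel>y\<parallel> = 1\<close>. Superadditivity of \<open>\<Phi>\<close> on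
  \<open>[0,\<infinity>)\<close> gives \<open>I\<^sub>\<Phi>(k(y - x)) + I\<^sub>\<Phi>(kx) \<le> I\<^sub>\<Phi>(ky)\<close>, so scaling \<open>(0, I\<^sub>\<Phi>(kx)) \<le> (1, I\<^sub>\<Phi>(ky))\<close>
  to \<open>p\<close>-norm one produces \<open>0 \<le> X \<le> Y\<close> with \<open>p Y = 1\<close>, \<open>p X \<approx> I\<^sub>\<Phi>(x)\<close> and
  \<open>\<parallel>y - x\<parallel> \<lesssim> p(Y - X) \<le> 1 - \<delta>(p X)\<close>. As \<open>k\<close> may lie slightly below 1, \<open>p X \<approx> I\<^sub>\<Phi>(x)\<close>
  uses the left continuity of \<open>c \<mapsto> I\<^sub>\<Phi>(cx)\<close>; and as \<open>\<delta>(\<epsilon>)\<close> constrains \<open>p X \<ge> \<epsilon>\<close> exactly,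
  the approximate pairs are passed to the limit by compactness.
\<close>

subsection \<open>Lattice norms on the plane and the modulus of monotonicity\<close>

text \<open>The pairs over which the infimum defining \<open>delta_m\<close> ranges, without the constraint on \<open>p X\<close>.\<close>

definition monotonicity_pair :: "(real \<times> real \<Rightarrow> real) \<Rightarrow> real \<times> real \<Rightarrow> real \<times> real \<Rightarrow> bool" where
  "monotonicity_pair p X Y \<longleftrightarrow>
     0 \<le> fst X \<and> 0 \<le> snd X \<and> fst X \<le> fst Y \<and> snd X \<le> snd Y \<and> p Y = 1"

context
  fixes p :: "real \<times> real \<Rightarrow> real"
  assumes lattice: "lattice_norm2 p"
begin

lemma lattice_norm2_homogeneous: "p (a * u, a * v) = \<bar>a\<bar> * p (u, v)"
  using lattice unfolding lattice_norm2_def is_norm2_def by blast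

lemma lattice_norm2_triangle: "p (X + Y) \<le> p X + p Y"
  using lattice unfolding lattice_norm2_def is_norm2_def by (cases X, cases Y) auto

lemma lattice_norm2_mono: "\<bar>u\<bar> \<le> \<bar>u'\<bar> \<Longrightarrow> \<bar>v\<bar> \<le> \<bar>v'\<bar> \<Longrightarrow> p (u, v) \<le> p (u', v')"
  using lattice unfolding lattice_norm2_def by blast

lemma lattice_norm2_nonneg: "0 \<le> p X"
proof -
  obtain u v where X: "X = (u, v)" by fastforce
  have "p (0, 0) = 0" using lattice_norm2_homogeneous[of 0 u v] by simp
  moreover have "p ((u, v) + (- u, - v)) \<le> p (u, v) + p (- u, - v)" by (rule lattice_norm2_triangle)
  moreover have "p (- u, - v) = p (u, v)" using lattice_norm2_homogeneous[of "-1" u v] by simp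
  ultimately show ?thesis unfolding X by simp
qed

context
  assumes unit: "p (1, 0) = 1" "p (0, 1) = 1"
begin

lemma lattice_norm2_axis: "p (u, 0) = \<bar>u\<bar>" "p (0, v) = \<bar>v\<bar>"
  using lattice_norm2_homogeneous[of u 1 0] lattice_norm2_homogeneous[of v 0 1] unit by simp_all

lemma lattice_norm2_le_l1: "p X \<le> \<bar>fst X\<bar> + \<bar>snd X\<bar>"
  using lattice_norm2_triangle[of "(fst X, 0)" "(0, snd X)"] lattice_norm2_axis by simp

lemma lattice_norm2_coordinates_le: "\<bar>fst X\<bar> \<le> p X" "\<bar>snd X\<bar> \<le> p X"
  using lattice_norm2_mono[of "fst X" "fst X" 0 "snd X"] lattice_norm2_mono[of 0 "fst X" "snd X" "snd X"]
  by (simp_all add: lattice_norm2_axis)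

lemma lattice_norm2_lipschitz: "2-lipschitz_on UNIV p"
proof (rule lipschitz_onI)
  fix X Y :: "real \<times> real"
  have "p X \<le> p Y + p (X - Y)" "p Y \<le> p X + p (Y - X)"
    using lattice_norm2_triangle[of Y "X - Y"] lattice_norm2_triangle[of X "Y - X"] by simp_all
  moreover have "p (X - Y) \<le> 2 * dist X Y" "p (Y - X) \<le> 2 * dist X Y"
    using lattice_norm2_le_l1[of "X - Y"] lattice_norm2_le_l1[of "Y - X"]
      dist_fst_le[of X Y] dist_snd_le[of X Y]
    by (simp_all add: dist_real_def abs_minus_commute)
  ultimately show "dist (p X) (p Y) \<le> 2 * dist X Y" by (simp add: dist_real_def)
qed simp

lemma lattice_norm2_continuous: "continuous_on UNIV p"
  using lattice_norm2_lipschitz by (rule lipschitz_on_continuous_on)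

lemma compact_monotonicity_pairs: "compact {(X, Y). monotonicity_pair p X Y}"
  unfolding compact_eq_bounded_closed
proof
  have "(X, Y) \<in> cbox ((0, 0), (-1, -1)) ((1, 1), (1, 1))" if "monotonicity_pair p X Y" for X Y
    using that lattice_norm2_coordinates_le[of Y]
    by (cases X, cases Y) (auto simp: monotonicity_pair_def cbox_Pair_eq)
  then have "{(X, Y). monotonicity_pair p X Y} \<subseteq> cbox ((0, 0), (-1, -1)) ((1, 1), (1, 1))"
    by blast
  then show "bounded {(X, Y). monotonicity_pair p X Y}"
    using bounded_cbox bounded_subset by blast
  have "continuous_on UNIV (\<lambda>Z :: (real \<times> real) \<times> real \<times> real. p (snd Z))"
    by (rule continuous_on_compose2[OF lattice_norm2_continuous]) (auto intro!: continuous_intros)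
  then show "closed {(X, Y). monotonicity_pair p X Y}"
    unfolding monotonicity_pair_def case_prod_beta
    by (intro closed_Collect_conj closed_Collect_le closed_Collect_eq) (auto intro!: continuous_intros)
qed

lemma monotonicity_pair_limit:
  assumes "\<And>h. 0 < h \<Longrightarrow> \<exists>X Y. monotonicity_pair p X Y \<and> e - h \<le> p X \<and> N - h \<le> p (Y - X)"
  shows "\<exists>X Y. monotonicity_pair p X Y \<and> e \<le> p X \<and> N \<le> p (Y - X)"
proof -
  define K where "K = {(X, Y). monotonicity_pair p X Y}"
  define f where "f Z = min (p (fst Z) - e) (p (snd Z - fst Z) - N)" for Z :: "(real \<times> real) \<times> real \<times> real"
  have "continuous_on UNIV (\<lambda>Z :: (real \<times> real) \<times> real \<times> real. p (fst Z))"
    by (rule continuous_on_compose2[OF lattice_norm2_continuous]) (auto intro: continuous_intros)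
  moreover have "continuous_on UNIV (\<lambda>Z :: (real \<times> real) \<times> real \<times> real. p (snd Z - fst Z))"
    by (rule continuous_on_compose2[OF lattice_norm2_continuous])
      (auto intro!: continuous_on_diff continuous_on_fst continuous_on_snd continuous_on_id)
  ultimately have "continuous_on UNIV f"
    unfolding f_def by (auto intro!: continuous_on_min continuous_on_diff)
  then have "continuous_on K f"
    by (rule continuous_on_subset) simp
  moreover have "K \<noteq> {}"
    using assms[of 1] unfolding K_def by (auto simp del: split_paired_Ex)
  ultimately obtain Z where Z: "Z \<in> K" and max: "\<And>W. W \<in> K \<Longrightarrow> f W \<le> f Z"
    using continuous_attains_sup[OF compact_monotonicity_pairs[folded K_def]] by blast
  have "0 \<le> f Z + h" if h: "0 < h" for h
  proof -
    obtain X Y where XY: "monotonicity_pair p X Y" "e - h \<le> p X" "N - h \<le> p (Y - X)"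
      using assms[OF h] by blast
    then have "- h \<le> f (X, Y)" by (simp add: f_def)
    moreover have "f (X, Y) \<le> f Z" using XY(1) by (intro max) (simp add: K_def)
    ultimately show ?thesis by linarith
  qed
  then have "0 \<le> f Z" by (rule field_le_epsilon)
  moreover obtain X Y where "Z = (X, Y)" by (rule prod.exhaust)
  ultimately show ?thesis using Z unfolding K_def f_def by (intro exI[of _ X] exI[of _ Y]) auto
qed

lemma monotonicity_pair_normalize:
  assumes "0 \<le> b" "b \<le> a"
  defines "r \<equiv> p (1, a)"
  shows "1 \<le> r" "monotonicity_pair p (0, b / r) (1 / r, a / r)" "p (0, b / r) = b / r"
    "p ((1 / r, a / r) - (0, b / r)) = p (1, a - b) / r"
proof -
  show r1: "1 \<le> r"
    using lattice_norm2_mono[of 1 1 0 a] unit unfolding r_def by simp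
  have "p (1 / r, a / r) = 1"
    using lattice_norm2_homogeneous[of "1 / r" 1 a] r1 unfolding r_def by simp
  then show "monotonicity_pair p (0, b / r) (1 / r, a / r)"
    using assms r1 by (simp add: monotonicity_pair_def divide_right_mono)
  show "p (0, b / r) = b / r"
    using lattice_norm2_axis(2)[of "b / r"] assms r1 by simp
  show "p ((1 / r, a / r) - (0, b / r)) = p (1, a - b) / r"
    using lattice_norm2_homogeneous[of "1 / r" 1 "a - b"] r1 by (simp add: diff_divide_distrib)
qed

end

lemma monotonicity_pair_le_one:
  assumes "monotonicity_pair p X Y"
  shows "p X \<le> 1" "p (Y - X) \<le> 1"
  using assms lattice_norm2_mono[of "fst X" "fst Y" "snd X" "snd Y"]
    lattice_norm2_mono[of "fst Y - fst X" "fst Y" "snd Y - snd X" "snd Y"]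
  by (auto simp: monotonicity_pair_def minus_prod_def)

lemma delta_m_le:
  assumes "monotonicity_pair p X Y" "\<epsilon> \<le> p X"
  shows "delta_m p \<epsilon> \<le> 1 - p (Y - X)"
proof (cases "\<epsilon> = 0")
  case True
  then show ?thesis using monotonicity_pair_le_one(2)[OF assms(1)] by (simp add: delta_m_def)
next
  case False
  let ?S = "{1 - p (fst Y - fst X, snd Y - snd X) | X Y.
    0 \<le> fst X \<and> 0 \<le> snd X \<and> fst X \<le> fst Y \<and> snd X \<le> snd Y \<and> p X \<ge> \<epsilon> \<and> p Y = 1}"
  have "1 - p (Y - X) \<in> ?S"
    using assms unfolding monotonicity_pair_def minus_prod_def by blast
  moreover have "bdd_below ?S"
    using monotonicity_pair_le_one(2) by (intro bdd_belowI[of _ 0]) (auto simp: monotonicity_pair_def minus_prod_def)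
  ultimately show ?thesis
    using False by (simp add: delta_m_def cInf_lower)
qed

end

subsection \<open>Orlicz functions and the Orlicz modular\<close>

context
  fixes \<Phi> :: "real \<Rightarrow> real"
  assumes orlicz: "orlicz_function \<Phi>"
begin

lemma orlicz_nonneg: "0 \<le> \<Phi> u"
  using orlicz unfolding orlicz_function_def by blast

lemma orlicz_even: "\<Phi> (- u) = \<Phi> u"
  using orlicz unfolding orlicz_function_def by blast

lemma orlicz_zero: "\<Phi> 0 = 0"
  using orlicz unfolding orlicz_function_def by blast

lemma orlicz_convex: "convex_on UNIV \<Phi>"
  using orlicz unfolding orlicz_function_def by blast

lemma orlicz_abs: "\<Phi> \<bar>u\<bar> = \<Phi> u"
  by (cases "0 \<le> u") (auto simp: orlicz_even)

lemma orlicz_scale_le: "0 \<le> c \<Longrightarrow> c \<le> 1 \<Longrightarrow> \<Phi> (c * u) \<le> c * \<Phi> u"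
  using convex_onD[OF orlicz_convex, of c 0 u] by (simp add: orlicz_zero)

lemma orlicz_scale_ge: "1 \<le> k \<Longrightarrow> k * \<Phi> u \<le> \<Phi> (k * u)"
  using orlicz_scale_le[of "1 / k" "k * u"] by (simp add: field_simps)

lemma orlicz_mono:
  assumes "\<bar>u\<bar> \<le> \<bar>v\<bar>"
  shows "\<Phi> u \<le> \<Phi> v"
proof (cases "v = 0")
  case True
  then show ?thesis using assms by (simp add: orlicz_zero)
next
  case False
  have "\<Phi> u = \<Phi> ((\<bar>u\<bar> / \<bar>v\<bar>) * \<bar>v\<bar>)"
    using False by (simp add: orlicz_abs)
  also have "\<dots> \<le> (\<bar>u\<bar> / \<bar>v\<bar>) * \<Phi> v"
    using assms False by (subst orlicz_abs[of v, symmetric]) (intro orlicz_scale_le, auto)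
  also have "\<dots> \<le> \<Phi> v"
    using mult_right_mono[OF assms orlicz_nonneg[of v]] False by (simp add: divide_le_eq mult.commute)
  finally show ?thesis .
qed

lemma orlicz_superadditive:
  assumes "0 \<le> u" "0 \<le> v"
  shows "\<Phi> u + \<Phi> v \<le> \<Phi> (u + v)"
proof (cases "u + v = 0")
  case True
  then have "u = 0" "v = 0" using assms by linarith+
  then show ?thesis by (simp add: orlicz_zero)
next
  case False
  then have uv: "0 < u + v" using assms by linarith
  have "\<Phi> u \<le> (u / (u + v)) * \<Phi> (u + v)" "\<Phi> v \<le> (v / (u + v)) * \<Phi> (u + v)"
    using orlicz_scale_le[of "u / (u + v)" "u + v"] orlicz_scale_le[of "v / (u + v)" "u + v"] assms uv
    by simp_all
  moreover have "(u / (u + v)) * \<Phi> (u + v) + (v / (u + v)) * \<Phi> (u + v) = \<Phi> (u + v)"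
    using uv by (simp add: add_divide_distrib[symmetric] distrib_right[symmetric])
  ultimately show ?thesis by linarith
qed

lemma orlicz_continuous: "continuous_on UNIV \<Phi>"
  using convex_on_continuous[OF open_UNIV orlicz_convex] .

lemma orlicz_borel_measurable [measurable]: "\<Phi> \<in> borel_measurable borel"
  using orlicz_continuous by (rule borel_measurable_continuous_onI)

lemma I_Phi_mono: "(\<And>t. \<bar>f t\<bar> \<le> \<bar>g t\<bar>) \<Longrightarrow> I_Phi M \<Phi> f \<le> I_Phi M \<Phi> g"
  unfolding I_Phi_def by (intro nn_integral_mono ennreal_leI orlicz_mono)

lemma I_Phi_scale_ge:
  assumes "f \<in> borel_measurable M" "1 \<le> k"
  shows "ennreal k * I_Phi M \<Phi> f \<le> I_Phi M \<Phi> (\<lambda>t. k * f t)"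
proof -
  have "ennreal k * I_Phi M \<Phi> f = (\<integral>\<^sup>+ t. ennreal k * ennreal (\<Phi> (f t)) \<partial>M)"
    unfolding I_Phi_def using assms(1) by (intro nn_integral_cmult[symmetric]) measurable
  also have "\<dots> \<le> I_Phi M \<Phi> (\<lambda>t. k * f t)"
    unfolding I_Phi_def using assms(2)
    by (intro nn_integral_mono) (simp add: ennreal_mult''[symmetric] orlicz_scale_ge orlicz_nonneg)
  finally show ?thesis .
qed

lemma I_Phi_dilation_ge:
  assumes "f \<in> borel_measurable M" "0 \<le> c" "c \<le> 1" "c \<le> k"
  shows "ennreal k * I_Phi M \<Phi> (\<lambda>t. c * f t) \<le> I_Phi M \<Phi> (\<lambda>t. k * f t)"
proof (cases "1 \<le> k")
  case True
  have "ennreal k * I_Phi M \<Phi> (\<lambda>t. c * f t) \<le> ennreal k * I_Phi M \<Phi> f"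
    using assms by (intro mult_left_mono I_Phi_mono) (auto simp: abs_mult mult_left_le_one_le)
  also have "\<dots> \<le> I_Phi M \<Phi> (\<lambda>t. k * f t)"
    using I_Phi_scale_ge[OF assms(1) True] .
  finally show ?thesis .
next
  case False
  have "ennreal k * I_Phi M \<Phi> (\<lambda>t. c * f t) \<le> I_Phi M \<Phi> (\<lambda>t. c * f t)"
    using mult_right_mono[OF ennreal_leI[of k 1]] False by simp
  also have "\<dots> \<le> I_Phi M \<Phi> (\<lambda>t. k * f t)"
    using assms by (intro I_Phi_mono) (auto simp: abs_mult mult_right_mono)
  finally show ?thesis .
qed

lemma I_Phi_superadditive:
  assumes "x \<in> borel_measurable M" "y \<in> borel_measurable M" "AE t in M. 0 \<le> x t \<and> x t \<le> y t"
  shows "I_Phi M \<Phi> (\<lambda>t. y t - x t) + I_Phi M \<Phi> x \<le> I_Phi M \<Phi> y"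
proof -
  have "I_Phi M \<Phi> (\<lambda>t. y t - x t) + I_Phi M \<Phi> x
      = (\<integral>\<^sup>+ t. ennreal (\<Phi> (y t - x t)) + ennreal (\<Phi> (x t)) \<partial>M)"
    unfolding I_Phi_def using assms(1,2) by (intro nn_integral_add[symmetric]; measurable)
  also have "\<dots> \<le> I_Phi M \<Phi> y"
    unfolding I_Phi_def using assms(3)
  proof (intro nn_integral_mono_AE, eventually_elim)
    case (elim t)
    then have "\<Phi> (y t - x t) + \<Phi> (x t) \<le> \<Phi> (y t)"
      using orlicz_superadditive[of "y t - x t" "x t"] by simp
    then show ?case
      by (simp add: ennreal_plus[symmetric] orlicz_nonneg del: ennreal_plus)
  qed
  finally show ?thesis .
qed

lemma I_Phi_dilated_split:
  assumes "x \<in> borel_measurable M" "y \<in> borel_measurable M" "AE t in M. 0 \<le> x t \<and> x t \<le> y t"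
    and "0 < k" "0 \<le> a" "I_Phi M \<Phi> (\<lambda>t. k * y t) = ennreal a"
  obtains b d where "0 \<le> b" "I_Phi M \<Phi> (\<lambda>t. k * x t) = ennreal b"
    "0 \<le> d" "I_Phi M \<Phi> (\<lambda>t. k * (y t - x t)) = ennreal d" "d + b \<le> a"
proof -
  have "I_Phi M \<Phi> (\<lambda>t. k * y t - k * x t) + I_Phi M \<Phi> (\<lambda>t. k * x t) \<le> I_Phi M \<Phi> (\<lambda>t. k * y t)"
    using assms(1-4) by (intro I_Phi_superadditive) (auto elim!: eventually_mono)
  then have split: "I_Phi M \<Phi> (\<lambda>t. k * (y t - x t)) + I_Phi M \<Phi> (\<lambda>t. k * x t) \<le> ennreal a"
    using assms(6) by (simp add: right_diff_distrib)
  then show ?thesis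
    using that assms(5)
    by (cases "I_Phi M \<Phi> (\<lambda>t. k * x t)"; cases "I_Phi M \<Phi> (\<lambda>t. k * (y t - x t))")
      (auto simp: top_unique ennreal_le_iff simp flip: ennreal_plus)
qed

lemma I_Phi_dilation_SUP:
  assumes "x \<in> borel_measurable M" "incseq c" "c \<longlonglongrightarrow> 1" "\<And>n. 0 \<le> c n"
  shows "I_Phi M \<Phi> x = (SUP n. I_Phi M \<Phi> (\<lambda>t. c n * x t))"
proof -
  define f where "f n t = ennreal (\<Phi> (c n * x t))" for n t
  have "incseq f"
    using assms(2,4) unfolding f_def incseq_def le_fun_def
    by (auto intro!: ennreal_leI orlicz_mono simp: abs_mult mult_right_mono)
  moreover have "\<And>n. f n \<in> borel_measurable M"
    unfolding f_def using assms(1) by measurable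
  moreover have "(SUP n. f n t) = ennreal (\<Phi> (x t))" for t
  proof (rule LIMSEQ_unique)
    show "(\<lambda>n. f n t) \<longlonglongrightarrow> (SUP n. f n t)"
      using \<open>incseq f\<close> by (intro LIMSEQ_SUP) (simp add: incseq_def le_fun_def)
    have "(\<lambda>n. c n * x t) \<longlonglongrightarrow> 1 * x t"
      by (intro tendsto_mult assms(3) tendsto_const)
    then show "(\<lambda>n. f n t) \<longlonglongrightarrow> ennreal (\<Phi> (x t))"
      unfolding f_def using continuous_on_tendsto_compose[OF orlicz_continuous]
      by (intro tendsto_ennrealI) simp
  qed
  ultimately show ?thesis
    unfolding I_Phi_def using nn_integral_monotone_convergence_SUP[of f M] by (simp add: f_def[abs_def])
qed

lemma I_Phi_approx_from_below:
  assumes "x \<in> borel_measurable M" "\<gamma> < enn2real (I_Phi M \<Phi> x)"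
  shows "\<exists>c. 0 < c \<and> c < 1 \<and> \<gamma> < enn2real (I_Phi M \<Phi> (\<lambda>t. c * x t))"
proof (cases "\<gamma> < 0")
  case True
  then show ?thesis by (intro exI[of _ "1 / 2"]) (auto intro: less_le_trans)
next
  case False
  define c where "c n = 1 - inverse (real n + 2)" for n
  have c01: "0 < c n" "c n < 1" for n
    unfolding c_def by (auto simp: field_simps)
  have "incseq c"
    unfolding c_def incseq_def by (auto intro!: le_imp_inverse_le)
  moreover have "c \<longlonglongrightarrow> 1"
    using LIMSEQ_Suc[OF LIMSEQ_inverse_real_of_nat_add_minus[of 1]] unfolding c_def by (simp add: add.commute)
  ultimately have SUP: "I_Phi M \<Phi> x = (SUP n. I_Phi M \<Phi> (\<lambda>t. c n * x t))"
    using I_Phi_dilation_SUP[OF assms(1)] c01 less_imp_le by blast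
  have finite: "I_Phi M \<Phi> x < \<infinity>"
    using assms(2) False by (cases "I_Phi M \<Phi> x") auto
  then have "ennreal \<gamma> < I_Phi M \<Phi> x"
    using assms(2) False by (cases "I_Phi M \<Phi> x") (auto simp: ennreal_less_iff)
  then obtain n where n: "ennreal \<gamma> < I_Phi M \<Phi> (\<lambda>t. c n * x t)"
    unfolding SUP by (auto simp: less_SUP_iff)
  moreover have "I_Phi M \<Phi> (\<lambda>t. c n * x t) \<le> I_Phi M \<Phi> x"
    using c01[of n] by (intro I_Phi_mono) (simp add: abs_mult mult_left_le_one_le)
  ultimately have "\<gamma> < enn2real (I_Phi M \<Phi> (\<lambda>t. c n * x t))"
    using False finite by (cases "I_Phi M \<Phi> (\<lambda>t. c n * x t)") (auto simp: ennreal_less_iff)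
  then show ?thesis using c01 by blast
qed

end

subsection \<open>The Orlicz norm generated by a lattice norm\<close>

lemma orlicz_p_norm_le:
  assumes "lattice_norm2 p" "0 < k" "0 \<le> d" "I_Phi M \<Phi> (\<lambda>t. k * z t) = ennreal d"
  shows "orlicz_p_norm M \<Phi> p z \<le> ennreal (p (1, d) / k)"
proof -
  have "orlicz_p_norm M \<Phi> p z \<le> ennreal (1 / k) * p_ext p (I_Phi M \<Phi> (\<lambda>t. k * z t))"
    unfolding orlicz_p_norm_def using assms(2) by (intro INF_lower) simp
  also have "\<dots> = ennreal (p (1, d) / k)"
    using assms by (simp add: p_ext_def ennreal_mult'[symmetric] lattice_norm2_nonneg)
  finally show ?thesis .
qed

lemma orlicz_p_norm_less_witness:
  assumes "lattice_norm2 p" "orlicz_p_norm M \<Phi> p y < ennreal r"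
  obtains k a where "0 < k" "0 \<le> a" "I_Phi M \<Phi> (\<lambda>t. k * y t) = ennreal a" "p (1, a) / k < r"
proof -
  obtain k where k: "0 < k" and less: "ennreal (1 / k) * p_ext p (I_Phi M \<Phi> (\<lambda>t. k * y t)) < ennreal r"
    using assms(2) unfolding orlicz_p_norm_def by (auto simp: INF_less_iff)
  have "I_Phi M \<Phi> (\<lambda>t. k * y t) \<noteq> \<infinity>"
    using less k by (auto simp: p_ext_def ennreal_mult_top)
  then obtain a where a: "0 \<le> a" "I_Phi M \<Phi> (\<lambda>t. k * y t) = ennreal a"
    by (cases "I_Phi M \<Phi> (\<lambda>t. k * y t)") auto
  then have "ennreal (p (1, a) / k) < ennreal r"
    using less k by (simp add: p_ext_def ennreal_mult'[symmetric] lattice_norm2_nonneg[OF assms(1)])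
  then have "p (1, a) / k < r"
    using k lattice_norm2_nonneg[OF assms(1)] by (simp add: ennreal_less_iff)
  then show ?thesis using that k a by blast
qed

lemma orlicz_p_norm_diff_bound:
  assumes lattice: "lattice_norm2 p" and unit: "p (1, 0) = 1" "p (0, 1) = 1"
    and orlicz: "orlicz_function \<Phi>"
    and meas: "x \<in> borel_measurable M" "y \<in> borel_measurable M"
    and between: "AE t in M. 0 \<le> x t \<and> x t \<le> y t"
    and norm_y: "orlicz_p_norm M \<Phi> p y = 1"
    and \<eta>: "0 < \<eta>" and c: "0 < c" "1 + \<eta> \<le> 1 / c"
  obtains X Y where "monotonicity_pair p X Y"
    "enn2real (I_Phi M \<Phi> (\<lambda>t. c * x t)) \<le> (1 + \<eta>) * p X"
    "orlicz_p_norm M \<Phi> p (\<lambda>t. y t - x t) \<le> ennreal ((1 + \<eta>) * p (Y - X))"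
proof -
  obtain k a where k: "0 < k" and a: "0 \<le> a" "I_Phi M \<Phi> (\<lambda>t. k * y t) = ennreal a"
    and s: "p (1, a) / k < 1 + \<eta>"
    using orlicz_p_norm_less_witness[OF lattice, of M \<Phi> y "1 + \<eta>"] norm_y \<eta> by auto
  define r where "r = p (1, a)"
  have rk: "r / k < 1 + \<eta>"
    using s unfolding r_def .
  have r: "1 \<le> r"
    using monotonicity_pair_normalize(1)[OF lattice unit a(1) order_refl] unfolding r_def .
  have "1 / k \<le> r / k"
    using r k by (simp add: divide_right_mono)
  then have "1 / k < 1 / c"
    using rk c(2) by linarith
  then have "c < k"
    using k c(1) by (simp add: field_simps)
  have "c + \<eta> * c \<le> 1"
    using c by (simp add: field_simps)
  then have "c < 1"
    using mult_pos_pos[OF \<eta> c(1)] by linarith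
  obtain b d where b: "0 \<le> b" "I_Phi M \<Phi> (\<lambda>t. k * x t) = ennreal b"
    and d: "0 \<le> d" "I_Phi M \<Phi> (\<lambda>t. k * (y t - x t)) = ennreal d" and "d + b \<le> a"
    using I_Phi_dilated_split[OF orlicz meas between k a] .
  then have ba: "b \<le> a" "d \<le> a - b"
    using d(1) by linarith+
  \<comment> \<open>the witnesses are \<open>(0, I\<^sub>\<Phi>(kx))\<close> and \<open>(1, I\<^sub>\<Phi>(ky))\<close> divided by \<open>p(1, I\<^sub>\<Phi>(ky))\<close>\<close>
  note normalized = monotonicity_pair_normalize[OF lattice unit b(1) ba(1), folded r_def]
  show ?thesis
  proof (rule that[OF normalized(2)])
    have "ennreal (k * enn2real (I_Phi M \<Phi> (\<lambda>t. c * x t))) \<le> ennreal b"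
      using I_Phi_dilation_ge[OF orlicz meas(1), of c k] c(1) \<open>c < k\<close> \<open>c < 1\<close> b(2) k
      by (cases "I_Phi M \<Phi> (\<lambda>t. c * x t)") (auto simp: ennreal_mult)
    then have "enn2real (I_Phi M \<Phi> (\<lambda>t. c * x t)) \<le> b / k"
      using k b(1) by (simp add: field_simps)
    also have "b / k = (r / k) * (b / r)"
      using r by simp
    also have "\<dots> \<le> (1 + \<eta>) * p (0, b / r)"
      unfolding normalized(3) using rk r b(1) by (intro mult_right_mono) auto
    finally show "enn2real (I_Phi M \<Phi> (\<lambda>t. c * x t)) \<le> (1 + \<eta>) * p (0, b / r)" .
  next
    have "orlicz_p_norm M \<Phi> p (\<lambda>t. y t - x t) \<le> ennreal (p (1, d) / k)"
      by (rule orlicz_p_norm_le[OF lattice k d])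
    also have "p (1, d) / k \<le> p (1, a - b) / k"
      using lattice_norm2_mono[OF lattice, of 1 1 d "a - b"] ba d(1) k by (simp add: divide_right_mono)
    also have "p (1, a - b) / k = (r / k) * p ((1 / r, a / r) - (0, b / r))"
      using normalized(4) r by simp
    also have "\<dots> \<le> (1 + \<eta>) * p ((1 / r, a / r) - (0, b / r))"
      using rk lattice_norm2_nonneg[OF lattice] by (intro mult_right_mono) auto
    finally show "orlicz_p_norm M \<Phi> p (\<lambda>t. y t - x t) \<le> ennreal ((1 + \<eta>) * p ((1 / r, a / r) - (0, b / r)))"
      by (simp add: ennreal_leI)
  qed
qed

lemma orlicz_p_norm_diff_approx:
  assumes lattice: "lattice_norm2 p" and unit: "p (1, 0) = 1" "p (0, 1) = 1"
    and orlicz: "orlicz_function \<Phi>"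
    and meas: "x \<in> borel_measurable M" "y \<in> borel_measurable M"
    and between: "AE t in M. 0 \<le> x t \<and> x t \<le> y t"
    and norm_y: "orlicz_p_norm M \<Phi> p y = 1"
    and h: "0 < h"
  obtains X Y where "monotonicity_pair p X Y" "enn2real (I_Phi M \<Phi> x) - h \<le> p X"
    "orlicz_p_norm M \<Phi> p (\<lambda>t. y t - x t) \<le> ennreal (p (Y - X) + h)"
proof -
  obtain c where c: "0 < c" "c < 1"
    and below: "enn2real (I_Phi M \<Phi> x) - h / 2 < enn2real (I_Phi M \<Phi> (\<lambda>t. c * x t))"
    using I_Phi_approx_from_below[OF orlicz meas(1), of "enn2real (I_Phi M \<Phi> x) - h / 2"] h by auto
  define \<eta> where "\<eta> = min (1 / c - 1) (h / 2)"
  have "1 < 1 / c"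
    using c by (simp add: field_simps)
  then have \<eta>: "0 < \<eta>" "1 + \<eta> \<le> 1 / c" "\<eta> \<le> h / 2"
    using h by (auto simp: \<eta>_def min_def)
  obtain X Y where XY: "monotonicity_pair p X Y"
    "enn2real (I_Phi M \<Phi> (\<lambda>t. c * x t)) \<le> (1 + \<eta>) * p X"
    "orlicz_p_norm M \<Phi> p (\<lambda>t. y t - x t) \<le> ennreal ((1 + \<eta>) * p (Y - X))"
    using orlicz_p_norm_diff_bound[OF lattice unit orlicz meas between norm_y \<eta>(1) c(1) \<eta>(2)] .
  have "\<eta> * p X \<le> \<eta>" "\<eta> * p (Y - X) \<le> \<eta>"
    using monotonicity_pair_le_one[OF lattice XY(1)] \<eta>(1) by (simp_all add: mult_left_le)
  show ?thesis
  proof (rule that[OF XY(1)])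
    show "enn2real (I_Phi M \<Phi> x) - h \<le> p X"
      using below XY(2) \<open>\<eta> * p X \<le> \<eta>\<close> \<eta>(3) by (simp add: algebra_simps)
    have "(1 + \<eta>) * p (Y - X) \<le> p (Y - X) + h"
      using \<open>\<eta> * p (Y - X) \<le> \<eta>\<close> \<eta>(3) h by (simp add: algebra_simps)
    then show "orlicz_p_norm M \<Phi> p (\<lambda>t. y t - x t) \<le> ennreal (p (Y - X) + h)"
      using XY(3) ennreal_leI order_trans by blast
  qed
qed

theorem theorem7:
  fixes M :: "'a measure" and \<Phi> :: "real \<Rightarrow> real" and p :: "real \<times> real \<Rightarrow> real"
    and x y :: "'a \<Rightarrow> real"
  assumes "sigma_finite_measure M" and "complete_measure M"
    and "lattice_norm2 p" and "strictly_monotone2 p"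
    and "p (1,0) = 1" and "p (0,1) = 1"
    and "orlicz_function \<Phi>"
    and "x \<in> orlicz_space M \<Phi>" and "y \<in> orlicz_space M \<Phi>"
    and "AE t in M. 0 \<le> x t \<and> x t \<le> y t"
    and "orlicz_p_norm M \<Phi> p y = 1"
  shows "orlicz_p_norm M \<Phi> p (\<lambda>t. y t - x t)
           \<le> ennreal (1 - delta_m p (enn2real (I_Phi M \<Phi> x)))"
proof -
  note lattice = assms(3) and unit = assms(5,6)
  have meas: "x \<in> borel_measurable M" "y \<in> borel_measurable M"
    using assms(8,9) unfolding orlicz_space_def by auto
  note approx = orlicz_p_norm_diff_approx[OF lattice unit assms(7) meas assms(10,11)]
  obtain X1 Y1 where "orlicz_p_norm M \<Phi> p (\<lambda>t. y t - x t) \<le> ennreal (p (Y1 - X1) + 1)"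
    by (rule approx[of 1]) auto
  then obtain N where N: "orlicz_p_norm M \<Phi> p (\<lambda>t. y t - x t) = ennreal N" "0 \<le> N"
    by (cases "orlicz_p_norm M \<Phi> p (\<lambda>t. y t - x t)") (auto simp: top_unique)
  have "\<exists>X Y. monotonicity_pair p X Y \<and> enn2real (I_Phi M \<Phi> x) - h \<le> p X \<and> N - h \<le> p (Y - X)"
    if h: "0 < h" for h
  proof -
    obtain X Y where XY: "monotonicity_pair p X Y" "enn2real (I_Phi M \<Phi> x) - h \<le> p X"
      "ennreal N \<le> ennreal (p (Y - X) + h)"
      using approx[OF h] unfolding N(1) by blast
    have "N - h \<le> p (Y - X)"
      using XY(3) h lattice_norm2_nonneg[OF lattice, of "Y - X"] by (simp add: ennreal_le_iff del: ennreal_plus)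
    then show ?thesis
      using XY(1,2) by blast
  qed
  then obtain X Y where "monotonicity_pair p X Y" "enn2real (I_Phi M \<Phi> x) \<le> p X" "N \<le> p (Y - X)"
    using monotonicity_pair_limit[OF lattice unit] by blast
  then have "N \<le> 1 - delta_m p (enn2real (I_Phi M \<Phi> x))"
    using delta_m_le[OF lattice] by fastforce
  then show ?thesis
    using N(1) by (simp add: ennreal_leI)
qed

end
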